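(* Let $k\le n$ and $\phi(k)<m<2n$. Then the value in $U_q^+(\mathfrak{sp}_{2n})$ of the bracketed word $[x_k\,x_{k+1}\cdots x_n\,y_m]$, where $y_m=v[n+1,m]=[x_{n+1},[x_{n+2},[\dots,[x_{m-1},x_m]\dots]]]$, does not depend on the arrangement of the (skew) brackets on the sequence $x_k,x_{k+1},\dots,x_n,y_m$.
   Context: Let $\mathbf{k}$ be a field, $G$ an abelian group, $n\ge2$, $X=\{x_1,\dots,x_n\}$, $g_i\in G$, characters $\chi^i:G\to\mathbf{k}^*$, $p_{ij}=\chi^i(g_j)$; for homogeneous $u,v$, $p(u,v)=\chi^u(g_v)$ (obtained by replacing $x_i$ by $g_i$, resp. $\chi^i$). $G\langle X\rangle$: skew group algebra with $x_ig=\chi^i(g)gx_i$; skew bracket $[u,v]=uv-p(u,v)vu$. Fix $q\in\mathbf{k}^*$, $q^3\ne1$, $q\ne-1$; assume $p_{ii}=q$ ($i<n$), $p_{nn}=q^2$, $p_{i,i-1}p_{i-1,i}=q^{-1}$ ($1<i<n$), $p_{n-1,n}p_{n,n-1}=q^{-2}$, $p_{ij}p_{ji}=1$ ($j>i+1$). $U_q^+(\mathfrak{sp}_{2n})$ is the quotient of $G\langle X\rangle$ by the ideal generated by $[x_i,[x_i,x_{i+1}]]$, $[[x_i,x_{i+1}],x_{i+1}]$ ($1\le i<n-1$), $[x_i,x_j]$ ($j>i+1$), $[[x_{n-1},x_n],x_n]$, $[x_{n-1},[x_{n-1},[x_{n-1},x_n]]]$. For $n<i<2n$, $x_i:=x_{2n-i}$;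 $\phi(i)=2n-i$. *)

theory Defs
  imports "HOL-Library.Poly_Mapping"
begin

text \<open>The skew group algebra G<X>: k-linear combinations of g*w, with g in G (written
additively, type 'g) and w a word in the letters x_i (list of indices). Relation
x_i g = chi_i(g) g x_i gives (g w)(h v) = chi^w(h) (g+h) (w v).\<close>

type_synonym ('g,'k) galg = "('g \<times> nat list) \<Rightarrow>\<^sub>0 'k"

definition chiw :: "(nat \<Rightarrow> 'g \<Rightarrow> 'k::comm_monoid_mult) \<Rightarrow> nat list \<Rightarrow> 'g \<Rightarrow> 'k" where
  "chiw \<chi> w h = (\<Prod>i\<leftarrow>w. \<chi> i h)"

definition gmult :: "(nat \<Rightarrow> 'g::ab_group_add \<Rightarrow> 'k::field) \<Rightarrow> ('g,'k) galg \<Rightarrow> ('g,'k) galg \<Rightarrow> ('g,'k) galg" where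
  "gmult \<chi> a b = (\<Sum>(g,w)\<in>Poly_Mapping.keys a. \<Sum>(h,v)\<in>Poly_Mapping.keys b.
      Poly_Mapping.single (g + h, w @ v) (Poly_Mapping.lookup a (g,w) * Poly_Mapping.lookup b (h,v) * chiw \<chi> w h))"

definition gscal :: "(nat \<Rightarrow> 'g::ab_group_add \<Rightarrow> 'k::field) \<Rightarrow> 'k \<Rightarrow> ('g,'k) galg \<Rightarrow> ('g,'k) galg" where
  "gscal \<chi> c a = gmult \<chi> (Poly_Mapping.single (0, []) c) a"

definition pdeg :: "(nat \<Rightarrow> 'g) \<Rightarrow> (nat \<Rightarrow> 'g \<Rightarrow> 'k::comm_monoid_mult) \<Rightarrow> nat list \<Rightarrow> nat list \<Rightarrow> 'k" where
  "pdeg g \<chi> u v = (\<Prod>i\<leftarrow>u. \<Prod>j\<leftarrow>v. \<chi> i (g j))"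

text \<open>Homogeneous elements are carried together with their degree (list of letters).
Skew bracket [u,v] = uv - p(u,v) vu.\<close>
definition sbr :: "(nat \<Rightarrow> 'g::ab_group_add) \<Rightarrow> (nat \<Rightarrow> 'g \<Rightarrow> 'k::field)
    \<Rightarrow> ('g,'k) galg \<times> nat list \<Rightarrow> ('g,'k) galg \<times> nat list \<Rightarrow> ('g,'k) galg \<times> nat list" where
  "sbr g \<chi> a b = (gmult \<chi> (fst a) (fst b) - gscal \<chi> (pdeg g \<chi> (snd a) (snd b)) (gmult \<chi> (fst b) (fst a)),
                   snd a @ snd b)"

definition xg :: "nat \<Rightarrow> ('g::ab_group_add,'k::field) galg \<times> nat list" where
  "xg i = (Poly_Mapping.single (0, [i]) 1, [i])"

inductive_set gideal :: "(nat \<Rightarrow> 'g::ab_group_add \<Rightarrow> 'k::field) \<Rightarrow> ('g,'k) galg set \<Rightarrow> ('g,'k) galg set"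
  for \<chi> R where
  gi_zero: "0 \<in> gideal \<chi> R"
| gi_gen: "r \<in> R \<Longrightarrow> r \<in> gideal \<chi> R"
| gi_add: "a \<in> gideal \<chi> R \<Longrightarrow> b \<in> gideal \<chi> R \<Longrightarrow> a + b \<in> gideal \<chi> R"
| gi_mult: "a \<in> gideal \<chi> R \<Longrightarrow> gmult \<chi> (gmult \<chi> u a) v \<in> gideal \<chi> R"

definition sp_rels :: "nat \<Rightarrow> (nat \<Rightarrow> 'g::ab_group_add) \<Rightarrow> (nat \<Rightarrow> 'g \<Rightarrow> 'k::field) \<Rightarrow> ('g,'k) galg set" where
  "sp_rels n g \<chi> =
     {fst (sbr g \<chi> (xg i) (sbr g \<chi> (xg i) (xg (i+1)))) | i. 1 \<le> i \<and> i < n - 1}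
   \<union> {fst (sbr g \<chi> (sbr g \<chi> (xg i) (xg (i+1))) (xg (i+1))) | i. 1 \<le> i \<and> i < n - 1}
   \<union> {fst (sbr g \<chi> (xg i) (xg j)) | i j. 1 \<le> i \<and> i + 1 < j \<and> j \<le> n}
   \<union> {fst (sbr g \<chi> (sbr g \<chi> (xg (n-1)) (xg n)) (xg n))}
   \<union> {fst (sbr g \<chi> (xg (n-1)) (sbr g \<chi> (xg (n-1)) (sbr g \<chi> (xg (n-1)) (xg n))))}"

definition Ueq :: "nat \<Rightarrow> (nat \<Rightarrow> 'g::ab_group_add) \<Rightarrow> (nat \<Rightarrow> 'g \<Rightarrow> 'k::field) \<Rightarrow> ('g,'k) galg \<Rightarrow> ('g,'k) galg \<Rightarrow> bool" where
  "Ueq n g \<chi> a b \<longleftrightarrow> a - b \<in> gideal \<chi> (sp_rels n g \<chi>)"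

definition xe :: "nat \<Rightarrow> nat \<Rightarrow> ('g::ab_group_add,'k::field) galg \<times> nat list" where
  "xe n i = xg (if i \<le> n then i else 2*n - i)"

fun rnest :: "(nat \<Rightarrow> 'g::ab_group_add) \<Rightarrow> (nat \<Rightarrow> 'g \<Rightarrow> 'k::field)
    \<Rightarrow> (('g,'k) galg \<times> nat list) list \<Rightarrow> ('g,'k) galg \<times> nat list" where
  "rnest g \<chi> [] = (0, [])"
| "rnest g \<chi> [a] = a"
| "rnest g \<chi> (a # b # zs) = sbr g \<chi> a (rnest g \<chi> (b # zs))"

definition vw :: "nat \<Rightarrow> (nat \<Rightarrow> 'g::ab_group_add) \<Rightarrow> (nat \<Rightarrow> 'g \<Rightarrow> 'k::field) \<Rightarrow> nat \<Rightarrow> nat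
    \<Rightarrow> ('g,'k) galg \<times> nat list" where
  "vw n g \<chi> a b = rnest g \<chi> (map (xe n) [a..<b+1])"

text \<open>Arrangements of brackets: full binary trees; the leaves (left to right) are the sequence.\<close>
datatype 'a btree = Lf 'a | Nd "'a btree" "'a btree"

fun leaves :: "'a btree \<Rightarrow> 'a list" where
  "leaves (Lf a) = [a]"
| "leaves (Nd l r) = leaves l @ leaves r"

fun bval :: "('a \<Rightarrow> 'a \<Rightarrow> 'a) \<Rightarrow> 'a btree \<Rightarrow> 'a" where
  "bval f (Lf a) = a"
| "bval f (Nd l r) = f (bval f l) (bval f r)"

end

theory Submission
  imports Defs "HOL-Library.Product_Plus"
begin

text \<open>Every element that occurs has group component 0 and trivial character twist, and on such
elements the product of G<X> is the ordinary monoid-algebra product, so skew brackets obey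
ring identities. The identity
  [[u,v],w] - [u,[v,w]] = - p(u,v) v[u,w] + p(v,w) [u,w]v
shows that a bracketing of a sequence z_1, ..., z_r can be reassociated freely as soon as
[z_i,z_j] = 0 in U for all non-adjacent positions i+1 < j; then every bracketing equals the
right-normed one. For the sequence x_k, ..., x_n, y_m with s = 2n - m < k we have
y_m = [x_(n-1),[x_(n-2),...,x_s]], and [x_i,x_j] = 0 for |i-j| > 1 is a defining relation.
It remains to show [x_i,y_m] = 0 for k <= i < n: moving x_i past the letters far from it reduces
this to [x_i,[x_(i+1),[x_i,x_(i-1)]]] = 0 and [x_(n-1),[x_(n-1),x_(n-2)]] = 0, which are explicit
linear combinations of the quantum Serre relations.\<close>

instantiation list :: (type) monoid_add
begin
definition zero_list_def: "0 = []"
definition plus_list_def: "(+) = (@)"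
instance by standard (auto simp: zero_list_def plus_list_def)
end

lemma poly_mapping_sum_single:
  "(a :: 'a \<Rightarrow>\<^sub>0 'b::comm_monoid_add)
     = (\<Sum>k\<in>Poly_Mapping.keys a. Poly_Mapping.single k (Poly_Mapping.lookup a k))"
  by (rule poly_mapping_eqI) (auto simp: lookup_sum lookup_single when_def in_keys_iff
      intro: sum.neutral cong: if_cong split: if_splits)

definition untwisted :: "(nat \<Rightarrow> 'g::ab_group_add \<Rightarrow> 'k::field) \<Rightarrow> ('g,'k) galg \<Rightarrow> bool" where
  "untwisted \<chi> a \<longleftrightarrow> (\<forall>k\<in>Poly_Mapping.keys a. fst k = 0 \<and> chiw \<chi> (snd k) 0 = 1)"

lemma gmult_untwisted:
  assumes "untwisted \<chi> a" "untwisted \<chi> b"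
  shows "gmult \<chi> a b = a * b"
proof -
  have "a * b = (\<Sum>k\<in>Poly_Mapping.keys a. Poly_Mapping.single k (Poly_Mapping.lookup a k))
              * (\<Sum>l\<in>Poly_Mapping.keys b. Poly_Mapping.single l (Poly_Mapping.lookup b l))"
    by (subst poly_mapping_sum_single[of a], subst poly_mapping_sum_single[of b]) simp
  also have "\<dots> = (\<Sum>k\<in>Poly_Mapping.keys a. \<Sum>l\<in>Poly_Mapping.keys b.
      Poly_Mapping.single (k + l) (Poly_Mapping.lookup a k * Poly_Mapping.lookup b l))"
    by (simp add: sum_distrib_left sum_distrib_right mult_single sum.swap[of _ "Poly_Mapping.keys b"])
  also have "\<dots> = gmult \<chi> a b"
    unfolding gmult_def
    by (intro sum.cong refl, clarsimp, intro sum.cong refl)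
      (use assms in \<open>force simp: untwisted_def plus_list_def\<close>)
  finally show ?thesis by simp
qed

definition scale :: "'k::field \<Rightarrow> ('g::ab_group_add,'k) galg \<Rightarrow> ('g,'k) galg" where
  "scale c x = Poly_Mapping.single 0 c * x"

lemma single_zero_commute:
  "x * Poly_Mapping.single 0 c = Poly_Mapping.single 0 c * (x :: ('g::ab_group_add,'k::field) galg)"
proof -
  have "x * Poly_Mapping.single 0 c
      = (\<Sum>k\<in>Poly_Mapping.keys x. Poly_Mapping.single k (Poly_Mapping.lookup x k)) * Poly_Mapping.single 0 c"
    by (subst poly_mapping_sum_single[of x]) simp
  also have "\<dots> = Poly_Mapping.single 0 c
      * (\<Sum>k\<in>Poly_Mapping.keys x. Poly_Mapping.single k (Poly_Mapping.lookup x k))"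
    by (simp add: sum_distrib_left sum_distrib_right mult_single mult.commute)
  finally show ?thesis by (subst (asm) poly_mapping_sum_single[of x, symmetric])
qed

lemma scale_mult_right: "x * scale c y = scale c (x * y)"
  unfolding scale_def by (metis mult.assoc single_zero_commute)

lemma scale_mult_left: "scale c x * y = scale c (x * y)"
  unfolding scale_def by (simp add: mult.assoc)

lemma scale_scale: "scale c (scale d y) = scale (c * d) y"
  by (simp add: scale_def mult.assoc[symmetric] mult_single)

lemma scale_add: "scale c (x + y) = scale c x + scale c y"
  by (simp add: scale_def distrib_left)

lemma scale_diff: "scale c (x - y) = scale c x - scale c y"
  by (simp add: scale_def right_diff_distrib)

lemma scale_minus: "scale c (- y) = - scale c y"
  by (simp add: scale_def)

lemma scale_uminus_left: "scale (- c) x = - scale c x"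
  by (simp add: scale_def single_uminus)

lemma scale_one [simp]: "scale 1 x = x"
  by (simp add: scale_def)

lemma scale_single: "scale c (Poly_Mapping.single k e) = Poly_Mapping.single k (c * e)"
  by (simp add: scale_def mult_single)

lemmas scale_simps = scale_mult_right scale_mult_left scale_scale scale_add scale_diff scale_minus

definition skew :: "('g::ab_group_add,'k::field) galg \<Rightarrow> ('g,'k) galg \<Rightarrow> 'k \<Rightarrow> ('g,'k) galg" where
  "skew x y p = x * y - scale p (y * x)"

lemma skew_diff_skew:
  "skew a b p - skew a' b' p = (a - a') * b + a' * (b - b') - scale p ((b - b') * a + b' * (a - a'))"
  unfolding skew_def by (simp add: algebra_simps scale_simps)

lemma skew_assoc_defect:
  "skew (skew u v puv) w (puw * pvw) - skew u (skew v w pvw) (puv * puw)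
     = - scale puv (v * skew u w puw) + scale pvw (skew u w puw * v)"
  unfolding skew_def by (simp add: algebra_simps scale_simps)

lemma skew_right_skew:
  "skew u (skew v w pvw) (puv * puw)
     = skew u v puv * w + scale puv (v * skew u w puw)
       - scale pvw (skew u w puw * v + scale puw (w * skew u v puv))"
  unfolding skew_def by (simp add: algebra_simps scale_simps)

lemma skew_swap: "p * p' = 1 \<Longrightarrow> scale (- p) (skew a b p') = skew b a p"
  unfolding skew_def by (simp add: scale_simps scale_uminus_left)

lemma chiw_append: "chiw \<chi> (w @ v) h = chiw \<chi> w h * chiw \<chi> v h"
  by (simp add: chiw_def)

lemma pdeg_append_left: "pdeg g \<chi> (u @ v) w = pdeg g \<chi> u w * pdeg g \<chi> v w"
  by (simp add: pdeg_def)

lemma pdeg_append_right: "pdeg g \<chi> u (v @ w) = pdeg g \<chi> u v * pdeg g \<chi> u w"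
  unfolding pdeg_def by (induction u) (simp_all add: algebra_simps)

lemma untwisted_add: "untwisted \<chi> a \<Longrightarrow> untwisted \<chi> b \<Longrightarrow> untwisted \<chi> (a + b)"
  unfolding untwisted_def by (meson Un_iff keys_add subsetD)

lemma untwisted_diff: "untwisted \<chi> a \<Longrightarrow> untwisted \<chi> b \<Longrightarrow> untwisted \<chi> (a - b)"
  unfolding diff_conv_add_uminus by (rule untwisted_add) (simp_all add: untwisted_def)

lemma untwisted_mult:
  assumes "untwisted \<chi> a" "untwisted \<chi> b"
  shows "untwisted \<chi> (a * b)"
  unfolding untwisted_def
proof
  fix k assume "k \<in> Poly_Mapping.keys (a * b)"
  then obtain x y where "k = x + y" "x \<in> Poly_Mapping.keys a" "y \<in> Poly_Mapping.keys b"
    using keys_mult by blast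
  with assms show "fst k = 0 \<and> chiw \<chi> (snd k) 0 = 1"
    unfolding untwisted_def by (auto simp: plus_list_def chiw_append)
qed

lemma untwisted_single: "chiw \<chi> w 0 = 1 \<Longrightarrow> untwisted \<chi> (Poly_Mapping.single (0, w) c)"
  by (simp add: untwisted_def)

lemma untwisted_single_zero: "untwisted \<chi> (Poly_Mapping.single 0 c)"
  unfolding zero_prod_def zero_list_def by (rule untwisted_single) (simp add: chiw_def)

lemma untwisted_one: "untwisted \<chi> 1"
  using untwisted_single_zero[of \<chi> 1] by simp

lemma untwisted_scale: "untwisted \<chi> a \<Longrightarrow> untwisted \<chi> (scale c a)"
  unfolding scale_def by (simp add: untwisted_mult untwisted_single_zero)

lemma gscal_untwisted: "untwisted \<chi> b \<Longrightarrow> gscal \<chi> c b = scale c b"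
  unfolding gscal_def scale_def
  using gmult_untwisted[OF untwisted_single_zero] by (simp add: zero_prod_def zero_list_def)

definition untwisted_pair :: "(nat \<Rightarrow> 'g::ab_group_add \<Rightarrow> 'k::field) \<Rightarrow> ('g,'k) galg \<times> nat list \<Rightarrow> bool" where
  "untwisted_pair \<chi> e \<longleftrightarrow> untwisted \<chi> (fst e)"

lemma fst_sbr:
  "untwisted_pair \<chi> a \<Longrightarrow> untwisted_pair \<chi> b \<Longrightarrow>
     fst (sbr g \<chi> a b) = skew (fst a) (fst b) (pdeg g \<chi> (snd a) (snd b))"
  unfolding untwisted_pair_def sbr_def skew_def
  by (simp add: gmult_untwisted gscal_untwisted untwisted_mult)

lemma snd_sbr: "snd (sbr g \<chi> a b) = snd a @ snd b"
  by (simp add: sbr_def)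

lemma untwisted_pair_sbr:
  "untwisted_pair \<chi> a \<Longrightarrow> untwisted_pair \<chi> b \<Longrightarrow> untwisted_pair \<chi> (sbr g \<chi> a b)"
  using fst_sbr[of \<chi> a b g] unfolding untwisted_pair_def skew_def
  by (simp add: untwisted_diff untwisted_mult untwisted_scale)

text \<open>Ideal membership is only tracked for untwisted elements, where the ideal's products
gmult reduce to ordinary products.\<close>

definition vanishes :: "(nat \<Rightarrow> 'g::ab_group_add \<Rightarrow> 'k::field) \<Rightarrow> ('g,'k) galg set \<Rightarrow> ('g,'k) galg \<Rightarrow> bool" where
  "vanishes \<chi> R x \<longleftrightarrow> x \<in> gideal \<chi> R \<and> untwisted \<chi> x"

lemma vanishes_gen: "r \<in> R \<Longrightarrow> untwisted \<chi> r \<Longrightarrow> vanishes \<chi> R r"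
  by (simp add: vanishes_def gi_gen)

lemma vanishes_add: "vanishes \<chi> R x \<Longrightarrow> vanishes \<chi> R y \<Longrightarrow> vanishes \<chi> R (x + y)"
  by (simp add: vanishes_def gi_add untwisted_add)

lemma vanishes_mult:
  "vanishes \<chi> R x \<Longrightarrow> untwisted \<chi> u \<Longrightarrow> untwisted \<chi> v \<Longrightarrow> vanishes \<chi> R (u * x * v)"
  unfolding vanishes_def using gi_mult[of x \<chi> R u v] by (simp add: gmult_untwisted untwisted_mult)

lemma vanishes_mult_left: "vanishes \<chi> R x \<Longrightarrow> untwisted \<chi> u \<Longrightarrow> vanishes \<chi> R (u * x)"
  by (metis vanishes_mult untwisted_one mult_1_right)

lemma vanishes_mult_right: "vanishes \<chi> R x \<Longrightarrow> untwisted \<chi> v \<Longrightarrow> vanishes \<chi> R (x * v)"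
  by (metis vanishes_mult untwisted_one mult_1_left)

lemma vanishes_scale: "vanishes \<chi> R x \<Longrightarrow> vanishes \<chi> R (scale c x)"
  unfolding scale_def using vanishes_mult_left untwisted_single_zero by blast

lemma vanishes_uminus: "vanishes \<chi> R x \<Longrightarrow> vanishes \<chi> R (- x)"
  using vanishes_scale[of \<chi> R x "- 1"] by (simp add: scale_uminus_left)

lemma vanishes_diff: "vanishes \<chi> R x \<Longrightarrow> vanishes \<chi> R y \<Longrightarrow> vanishes \<chi> R (x - y)"
  unfolding diff_conv_add_uminus by (intro vanishes_add vanishes_uminus)

lemma vanishes_skew_left:
  "vanishes \<chi> R x \<Longrightarrow> untwisted \<chi> y \<Longrightarrow> vanishes \<chi> R (skew x y p)"
  unfolding skew_def
  by (intro vanishes_diff vanishes_scale vanishes_mult_left vanishes_mult_right)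

definition cong_mod :: "(nat \<Rightarrow> 'g::ab_group_add \<Rightarrow> 'k::field) \<Rightarrow> ('g,'k) galg set
    \<Rightarrow> ('g,'k) galg \<times> nat list \<Rightarrow> ('g,'k) galg \<times> nat list \<Rightarrow> bool" where
  "cong_mod \<chi> R a b \<longleftrightarrow> vanishes \<chi> R (fst a - fst b) \<and> snd a = snd b"

lemma cong_mod_refl: "cong_mod \<chi> R a a"
  by (simp add: cong_mod_def vanishes_def gi_zero untwisted_def)

lemma cong_mod_sym: "cong_mod \<chi> R a b \<Longrightarrow> cong_mod \<chi> R b a"
  unfolding cong_mod_def using vanishes_uminus by fastforce

lemma cong_mod_trans [trans]: "cong_mod \<chi> R a b \<Longrightarrow> cong_mod \<chi> R b c \<Longrightarrow> cong_mod \<chi> R a c"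
  unfolding cong_mod_def using vanishes_add by fastforce

lemma cong_mod_vanishes: "cong_mod \<chi> R a b \<Longrightarrow> vanishes \<chi> R (fst b) \<Longrightarrow> vanishes \<chi> R (fst a)"
  unfolding cong_mod_def using vanishes_add[of \<chi> R "fst a - fst b" "fst b"] by simp

lemma sbr_cong:
  assumes "untwisted_pair \<chi> a" "untwisted_pair \<chi> a'" "untwisted_pair \<chi> b" "untwisted_pair \<chi> b'"
    and "cong_mod \<chi> R a a'" "cong_mod \<chi> R b b'"
  shows "cong_mod \<chi> R (sbr g \<chi> a b) (sbr g \<chi> a' b')"
proof -
  have deg: "snd a = snd a'" "snd b = snd b'"
    and van: "vanishes \<chi> R (fst a - fst a')" "vanishes \<chi> R (fst b - fst b')"
    using assms(5,6) by (auto simp: cong_mod_def)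
  have unt: "untwisted \<chi> (fst a)" "untwisted \<chi> (fst a')" "untwisted \<chi> (fst b)" "untwisted \<chi> (fst b')"
    using assms(1-4) by (auto simp: untwisted_pair_def)
  have "vanishes \<chi> R ((fst a - fst a') * fst b + fst a' * (fst b - fst b')
      - scale p ((fst b - fst b') * fst a + fst b' * (fst a - fst a')))" for p
    using vanishes_mult_right[OF van(1) unt(3)] vanishes_mult_left[OF van(2) unt(2)]
      vanishes_mult_right[OF van(2) unt(1)] vanishes_mult_left[OF van(1) unt(4)]
    by (intro vanishes_diff vanishes_add vanishes_scale)
  then show ?thesis
    using assms(1-4) deg by (simp add: cong_mod_def fst_sbr snd_sbr skew_diff_skew)
qed

definition skew_commute :: "(nat \<Rightarrow> 'g::ab_group_add) \<Rightarrow> (nat \<Rightarrow> 'g \<Rightarrow> 'k::field) \<Rightarrow> ('g,'k) galg set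
    \<Rightarrow> ('g,'k) galg \<times> nat list \<Rightarrow> ('g,'k) galg \<times> nat list \<Rightarrow> bool" where
  "skew_commute g \<chi> R u w \<longleftrightarrow> vanishes \<chi> R (fst (sbr g \<chi> u w))"

lemma sbr_assoc_cong:
  assumes "untwisted_pair \<chi> u" "untwisted_pair \<chi> v" "untwisted_pair \<chi> w"
    and "skew_commute g \<chi> R u w"
  shows "cong_mod \<chi> R (sbr g \<chi> (sbr g \<chi> u v) w) (sbr g \<chi> u (sbr g \<chi> v w))"
proof -
  let ?X = "skew (fst u) (fst w) (pdeg g \<chi> (snd u) (snd w))"
  have "vanishes \<chi> R ?X" using assms by (simp add: skew_commute_def fst_sbr)
  then have "vanishes \<chi> R (- scale (pdeg g \<chi> (snd u) (snd v)) (fst v * ?X)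
      + scale (pdeg g \<chi> (snd v) (snd w)) (?X * fst v))"
    using assms(2) by (intro vanishes_add vanishes_uminus vanishes_scale vanishes_mult_left
        vanishes_mult_right) (auto simp: untwisted_pair_def)
  then show ?thesis
    using assms(1-3) unfolding cong_mod_def
    by (simp add: fst_sbr snd_sbr untwisted_pair_sbr pdeg_append_left pdeg_append_right
        skew_assoc_defect)
qed

lemma skew_commute_sbr:
  assumes "untwisted_pair \<chi> u" "untwisted_pair \<chi> v" "untwisted_pair \<chi> w"
    and "skew_commute g \<chi> R u v" "skew_commute g \<chi> R u w"
  shows "skew_commute g \<chi> R u (sbr g \<chi> v w)"
proof -
  let ?X = "skew (fst u) (fst v) (pdeg g \<chi> (snd u) (snd v))"
  let ?Y = "skew (fst u) (fst w) (pdeg g \<chi> (snd u) (snd w))"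
  have "vanishes \<chi> R ?X" "vanishes \<chi> R ?Y"
    using assms by (simp_all add: skew_commute_def fst_sbr)
  then have "vanishes \<chi> R (?X * fst w + scale (pdeg g \<chi> (snd u) (snd v)) (fst v * ?Y)
     - scale (pdeg g \<chi> (snd v) (snd w)) (?Y * fst v + scale (pdeg g \<chi> (snd u) (snd w)) (fst w * ?X)))"
    using assms(1-3) by (intro vanishes_add vanishes_diff vanishes_scale vanishes_mult_left
        vanishes_mult_right) (auto simp: untwisted_pair_def)
  then show ?thesis
    using assms(1-3) unfolding skew_commute_def
    by (simp add: fst_sbr snd_sbr untwisted_pair_sbr pdeg_append_right skew_right_skew)
qed

lemma skew_commute_swap:
  assumes "untwisted_pair \<chi> u" "untwisted_pair \<chi> v"
    and "pdeg g \<chi> (snd v) (snd u) * pdeg g \<chi> (snd u) (snd v) = 1"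
    and "skew_commute g \<chi> R u v"
  shows "skew_commute g \<chi> R v u"
proof -
  have "vanishes \<chi> R (scale (- pdeg g \<chi> (snd v) (snd u)) (fst (sbr g \<chi> u v)))"
    using assms(4) by (simp add: skew_commute_def vanishes_scale)
  then show ?thesis
    using assms(1-3) by (simp add: skew_commute_def fst_sbr skew_swap)
qed

lemma untwisted_pair_rnest:
  "zs \<noteq> [] \<Longrightarrow> \<forall>z\<in>set zs. untwisted_pair \<chi> z \<Longrightarrow> untwisted_pair \<chi> (rnest g \<chi> zs)"
  by (induction g \<chi> zs rule: rnest.induct) (auto simp: untwisted_pair_sbr)

lemma untwisted_pair_foldr:
  "\<forall>z\<in>set ds. untwisted_pair \<chi> z \<Longrightarrow> untwisted_pair \<chi> a \<Longrightarrow> untwisted_pair \<chi> (foldr (sbr g \<chi>) ds a)"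
  by (induction ds) (auto simp: untwisted_pair_sbr)

lemma untwisted_pair_bval:
  "\<forall>z\<in>set (leaves t). untwisted_pair \<chi> z \<Longrightarrow> untwisted_pair \<chi> (bval (sbr g \<chi>) t)"
  by (induction t) (auto simp: untwisted_pair_sbr)

lemma rnest_Cons: "zs \<noteq> [] \<Longrightarrow> rnest g \<chi> (a # zs) = sbr g \<chi> a (rnest g \<chi> zs)"
  by (cases zs) auto

lemma rnest_append_Cons: "rnest g \<chi> (ds @ a # cs) = foldr (sbr g \<chi>) ds (rnest g \<chi> (a # cs))"
  by (induction ds) (auto simp: rnest_Cons)

lemma skew_commute_foldr:
  assumes "\<forall>z\<in>set ds. untwisted_pair \<chi> z" "untwisted_pair \<chi> u" "untwisted_pair \<chi> a"
    and "\<forall>d\<in>set ds. skew_commute g \<chi> R u d" "skew_commute g \<chi> R u a"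
  shows "skew_commute g \<chi> R u (foldr (sbr g \<chi>) ds a)"
  using assms by (induction ds) (auto intro: skew_commute_sbr untwisted_pair_foldr)

lemma skew_commute_rnest:
  assumes "zs \<noteq> []" "\<forall>z\<in>set zs. untwisted_pair \<chi> z" "untwisted_pair \<chi> u"
    and "\<forall>z\<in>set zs. skew_commute g \<chi> R u z"
  shows "skew_commute g \<chi> R u (rnest g \<chi> zs)"
proof -
  obtain ds a where "zs = ds @ [a]" using assms(1) by (metis rev_exhaust)
  then show ?thesis
    using assms(2-4) by (simp add: rnest_append_Cons skew_commute_foldr)
qed

lemma sbr_rnest_append_cong:
  assumes "ls \<noteq> []" "rs \<noteq> []" "\<forall>z\<in>set (ls @ rs). untwisted_pair \<chi> z"
    and "\<forall>l\<in>set (butlast ls). \<forall>r\<in>set rs. skew_commute g \<chi> R l r"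
  shows "cong_mod \<chi> R (sbr g \<chi> (rnest g \<chi> ls) (rnest g \<chi> rs)) (rnest g \<chi> (ls @ rs))"
  using assms
proof (induction ls)
  case Nil
  then show ?case by simp
next
  case (Cons a ls)
  show ?case
  proof (cases "ls = []")
    case True
    then show ?thesis using Cons.prems(2) by (simp add: rnest_Cons cong_mod_refl)
  next
    case False
    have unt: "untwisted_pair \<chi> a" "untwisted_pair \<chi> (rnest g \<chi> ls)"
      "untwisted_pair \<chi> (rnest g \<chi> rs)" "untwisted_pair \<chi> (rnest g \<chi> (ls @ rs))"
      using Cons.prems False by (auto intro!: untwisted_pair_rnest)
    have "skew_commute g \<chi> R a (rnest g \<chi> rs)"
      using Cons.prems False by (intro skew_commute_rnest) auto
    then have "cong_mod \<chi> R (sbr g \<chi> (sbr g \<chi> a (rnest g \<chi> ls)) (rnest g \<chi> rs))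
        (sbr g \<chi> a (sbr g \<chi> (rnest g \<chi> ls) (rnest g \<chi> rs)))"
      using unt by (intro sbr_assoc_cong)
    also have "cong_mod \<chi> R \<dots> (sbr g \<chi> a (rnest g \<chi> (ls @ rs)))"
      using Cons False unt by (intro sbr_cong cong_mod_refl untwisted_pair_sbr) (auto simp: in_set_butlastD)
    finally show ?thesis using False Cons.prems(2) by (simp add: rnest_Cons)
  qed
qed

definition far_commuting :: "(nat \<Rightarrow> 'g::ab_group_add) \<Rightarrow> (nat \<Rightarrow> 'g \<Rightarrow> 'k::field) \<Rightarrow> ('g,'k) galg set
    \<Rightarrow> (('g,'k) galg \<times> nat list) list \<Rightarrow> bool" where
  "far_commuting g \<chi> R zs \<longleftrightarrow>
     (\<forall>i j. i + 1 < j \<longrightarrow> j < length zs \<longrightarrow> skew_commute g \<chi> R (zs ! i) (zs ! j))"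

lemma far_commuting_appendD:
  assumes "far_commuting g \<chi> R (xs @ ys)"
  shows "far_commuting g \<chi> R xs" "far_commuting g \<chi> R ys"
    and "\<forall>l\<in>set (butlast xs). \<forall>r\<in>set ys. skew_commute g \<chi> R l r"
proof -
  show "far_commuting g \<chi> R xs"
    unfolding far_commuting_def
  proof (intro allI impI)
    fix i j assume "i + 1 < j" "j < length xs"
    then show "skew_commute g \<chi> R (xs ! i) (xs ! j)"
      using assms[unfolded far_commuting_def, rule_format, of i j] by (simp add: nth_append)
  qed
  show "far_commuting g \<chi> R ys"
    unfolding far_commuting_def
  proof (intro allI impI)
    fix i j assume "i + 1 < j" "j < length ys"
    then show "skew_commute g \<chi> R (ys ! i) (ys ! j)"
      using assms[unfolded far_commuting_def, rule_format, of "length xs + i" "length xs + j"]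
      by (simp add: nth_append)
  qed
  show "\<forall>l\<in>set (butlast xs). \<forall>r\<in>set ys. skew_commute g \<chi> R l r"
  proof (intro ballI)
    fix l r assume "l \<in> set (butlast xs)" "r \<in> set ys"
    then obtain i j where "i < length xs - 1" "l = xs ! i" "j < length ys" "r = ys ! j"
      by (auto simp: in_set_conv_nth nth_butlast)
    then show "skew_commute g \<chi> R l r"
      using assms[unfolded far_commuting_def, rule_format, of i "length xs + j"]
      by (simp add: nth_append less_diff_conv)
  qed
qed

lemma leaves_nonempty: "leaves t \<noteq> []"
  by (induction t) auto

theorem bval_sbr_cong_rnest:
  assumes "far_commuting g \<chi> R (leaves t)" "\<forall>z\<in>set (leaves t). untwisted_pair \<chi> z"
  shows "cong_mod \<chi> R (bval (sbr g \<chi>) t) (rnest g \<chi> (leaves t))"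
  using assms
proof (induction t)
  case (Lf a)
  then show ?case by (simp add: cong_mod_refl)
next
  case (Nd l r)
  note far = far_commuting_appendD[OF Nd.prems(1)[simplified]]
  have unt: "untwisted_pair \<chi> (bval (sbr g \<chi>) l)" "untwisted_pair \<chi> (bval (sbr g \<chi>) r)"
    "untwisted_pair \<chi> (rnest g \<chi> (leaves l))" "untwisted_pair \<chi> (rnest g \<chi> (leaves r))"
    using Nd.prems(2) leaves_nonempty by (auto intro!: untwisted_pair_bval untwisted_pair_rnest)
  have "cong_mod \<chi> R (bval (sbr g \<chi>) (Nd l r)) (sbr g \<chi> (rnest g \<chi> (leaves l)) (rnest g \<chi> (leaves r)))"
    using Nd far unt by (simp add: sbr_cong)
  also have "cong_mod \<chi> R \<dots> (rnest g \<chi> (leaves (Nd l r)))"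
    using Nd.prems(2) far(3) by (simp add: sbr_rnest_append_cong leaves_nonempty)
  finally show ?case .
qed

lemma foldr_sbr_cong_sbr:
  assumes "\<forall>z\<in>set ds. untwisted_pair \<chi> z" "untwisted_pair \<chi> a" "untwisted_pair \<chi> c"
    and "\<forall>d\<in>set ds. skew_commute g \<chi> R d c"
  shows "cong_mod \<chi> R (foldr (sbr g \<chi>) ds (sbr g \<chi> a c)) (sbr g \<chi> (foldr (sbr g \<chi>) ds a) c)"
  using assms
proof (induction ds)
  case Nil
  then show ?case by (simp add: cong_mod_refl)
next
  case (Cons d ds)
  have unt: "untwisted_pair \<chi> d" "untwisted_pair \<chi> (foldr (sbr g \<chi>) ds a)"
    "untwisted_pair \<chi> (foldr (sbr g \<chi>) ds (sbr g \<chi> a c))"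
    using Cons.prems by (simp_all add: untwisted_pair_foldr untwisted_pair_sbr)
  have IH: "cong_mod \<chi> R (foldr (sbr g \<chi>) ds (sbr g \<chi> a c)) (sbr g \<chi> (foldr (sbr g \<chi>) ds a) c)"
    using Cons by simp
  have "cong_mod \<chi> R (sbr g \<chi> d (foldr (sbr g \<chi>) ds (sbr g \<chi> a c)))
      (sbr g \<chi> d (sbr g \<chi> (foldr (sbr g \<chi>) ds a) c))"
    using Cons.prems(3) unt by (intro sbr_cong[OF _ _ _ _ cong_mod_refl IH] untwisted_pair_sbr)
  also have "cong_mod \<chi> R \<dots> (sbr g \<chi> (sbr g \<chi> d (foldr (sbr g \<chi>) ds a)) c)"
    using Cons.prems(3,4) unt by (intro cong_mod_sym[OF sbr_assoc_cong]) simp_all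
  finally show ?case by simp
qed

lemma vanishes_foldr_rnest:
  assumes "\<forall>z\<in>set (ds @ a # cs). untwisted_pair \<chi> z"
    and "\<forall>d\<in>set ds. \<forall>c\<in>set cs. skew_commute g \<chi> R d c"
    and "vanishes \<chi> R (fst (foldr (sbr g \<chi>) ds a))"
  shows "vanishes \<chi> R (fst (foldr (sbr g \<chi>) ds (rnest g \<chi> (a # cs))))"
proof (cases "cs = []")
  case False
  let ?c = "rnest g \<chi> cs"
  have unt: "untwisted_pair \<chi> ?c" "untwisted_pair \<chi> (foldr (sbr g \<chi>) ds a)"
    using assms(1) False by (simp_all add: untwisted_pair_rnest untwisted_pair_foldr)
  have "skew_commute g \<chi> R d ?c" if "d \<in> set ds" for d
    using assms(1,2) False that by (intro skew_commute_rnest) auto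
  then have "cong_mod \<chi> R (foldr (sbr g \<chi>) ds (sbr g \<chi> a ?c)) (sbr g \<chi> (foldr (sbr g \<chi>) ds a) ?c)"
    using assms(1) unt by (intro foldr_sbr_cong_sbr) auto
  moreover have "vanishes \<chi> R (fst (sbr g \<chi> (foldr (sbr g \<chi>) ds a) ?c))"
    using assms(3) unt by (simp add: fst_sbr vanishes_skew_left untwisted_pair_def)
  ultimately show ?thesis
    using False by (simp add: rnest_Cons cong_mod_vanishes)
qed (use assms(3) in simp)

lemma skew_nested_pair_identity:
  fixes a b :: "('g::ab_group_add,'k::field) galg"
  assumes "q \<noteq> 0" "r \<noteq> 0"
  shows "skew b (skew b a (inverse q * inverse r)) (q * (inverse q * inverse r))
    = scale (inverse q * inverse r * inverse r) (skew (skew a b r) b (r * q))"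
  unfolding skew_def using assms
  by (simp add: scale_simps algebra_simps) (simp add: field_simps power2_eq_square)

lemma single_word_mult:
  "Poly_Mapping.single (0::'g::ab_group_add, u) (c::'k::field) * Poly_Mapping.single (0, v) e
     = Poly_Mapping.single (0, u @ v) (c * e)"
  by (simp add: mult_single plus_list_def)

lemma single_word_mult_assoc:
  "Poly_Mapping.single (0::'g::ab_group_add, u) (c::'k::field) * (Poly_Mapping.single (0, v) e * z)
     = Poly_Mapping.single (0, u @ v) (c * e) * z"
  by (simp add: single_word_mult mult.assoc[symmetric])

text \<open>With a, b, d = x_(i-1), x_i, x_(i+1) and t = 1/(q+1) this writes [x_i,[x_(i+1),[x_i,x_(i-1)]]]
through the relations [x_i,[x_i,x_(i+1)]], [[x_(i-1),x_i],x_i] and [x_(i-1),x_(i+1)]; it is checked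
coefficientwise on the twelve words that occur.\<close>

lemma skew_nested_triple_identity:
  fixes \<alpha> \<beta> \<delta> :: nat and q r1 r2 r3 t :: "'k::field"
  assumes dist: "\<alpha> \<noteq> \<beta>" "\<beta> \<noteq> \<delta>" "\<alpha> \<noteq> \<delta>"
    and nz: "q \<noteq> 0" "r1 \<noteq> 0" "r2 \<noteq> 0" "r3 \<noteq> 0" and ht: "t * (q + 1) = 1"
    and a: "a = Poly_Mapping.single (0::'g::ab_group_add, [\<alpha>]) (1::'k)"
    and b: "b = Poly_Mapping.single (0::'g, [\<beta>]) (1::'k)"
    and d: "d = Poly_Mapping.single (0::'g, [\<delta>]) (1::'k)"
  shows "skew b (skew d (skew b a (inverse q * inverse r1)) (inverse q * inverse r2 * inverse r3))
        (r2 * q * (inverse q * inverse r1))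
    = scale (- (t * inverse r2)) (skew b (skew b d r2) (q * r2) * a)
    + scale (inverse q * inverse q * t * inverse r1 * inverse r1 * inverse r2 * inverse r3)
        (a * skew b (skew b d r2) (q * r2))
    + scale (- (inverse q * inverse q * t * inverse r1 * inverse r1 * inverse r2 * inverse r3))
        (skew (skew a b r1) b (r1 * q) * d)
    + scale (r2 * t * inverse r1 * inverse r1) (d * skew (skew a b r1) b (r1 * q))
    + scale (- (r2 * inverse q * t * inverse r1 * inverse r1 * inverse r3)) (skew a d r3 * (b * b))
    + scale (inverse q * inverse r1 * inverse r3) (b * (skew a d r3 * b))
    + scale (- (t * inverse r2 * inverse r3)) (b * (b * skew a d r3))"
  unfolding a b d
  apply (simp only: skew_def scale_single single_word_mult single_word_mult_assoc distrib_left
      distrib_right left_diff_distrib right_diff_distrib scale_add scale_diff scale_minus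
      mult_minus_left mult_minus_right append.simps)
  apply (rule poly_mapping_eqI)
  apply (simp only: lookup_add lookup_minus lookup_uminus lookup_single when_def)
  subgoal for k
  proof -
    have ht2: "r * t + q * (r * t) = r" for r
    proof -
      have "r * t + q * (r * t) = r * (t * (q + 1))" by (simp add: algebra_simps)
      then show ?thesis using ht by simp
    qed
    have ds: "\<alpha> \<noteq> \<beta>" "\<beta> \<noteq> \<delta>" "\<alpha> \<noteq> \<delta>" "\<beta> \<noteq> \<alpha>" "\<delta> \<noteq> \<beta>" "\<delta> \<noteq> \<alpha>" using dist by auto
    let ?words = "[[\<alpha>,\<beta>,\<beta>,\<delta>],[\<alpha>,\<beta>,\<delta>,\<beta>],[\<alpha>,\<delta>,\<beta>,\<beta>],[\<beta>,\<alpha>,\<beta>,\<delta>],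
      [\<beta>,\<alpha>,\<delta>,\<beta>],[\<beta>,\<beta>,\<alpha>,\<delta>],[\<beta>,\<beta>,\<delta>,\<alpha>],[\<beta>,\<delta>,\<alpha>,\<beta>],[\<beta>,\<delta>,\<beta>,\<alpha>],
      [\<delta>,\<alpha>,\<beta>,\<beta>],[\<delta>,\<beta>,\<alpha>,\<beta>],[\<delta>,\<beta>,\<beta>,\<alpha>]]"
    show ?thesis
    proof (cases "k \<in> Pair 0 ` set ?words")
      case True
      then show ?thesis
        apply (simp only: set_simps image_insert image_empty insert_iff empty_iff)
        apply (elim disjE)
        apply (simp_all add: ds)
        using nz ht apply (simp_all add: field_simps)
        apply (simp_all add: ht2)
        done
    next
      case False
      then have "\<forall>w\<in>set ?words. (0, w) \<noteq> k" by auto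
      then show ?thesis by simp
    qed
  qed
  done

lemma upt_append_split: "a \<le> b \<Longrightarrow> b \<le> c \<Longrightarrow> [a..<c] = [a..<b] @ [b..<c]"
  by (metis le_add_diff_inverse upt_add_eq_append)

locale sp_setting =
  fixes n :: nat and q :: "'k::field" and g :: "nat \<Rightarrow> 'g::ab_group_add" and \<chi> :: "nat \<Rightarrow> 'g \<Rightarrow> 'k"
  assumes chi_hom: "\<And>i a b. 1 \<le> i \<Longrightarrow> i \<le> n \<Longrightarrow> \<chi> i (a + b) = \<chi> i a * \<chi> i b"
    and chi_nz: "\<And>i a. 1 \<le> i \<Longrightarrow> i \<le> n \<Longrightarrow> \<chi> i a \<noteq> 0"
    and q_nz: "q \<noteq> 0" and q_neq_minus_one: "q \<noteq> -1"
    and pii: "\<And>i. 1 \<le> i \<Longrightarrow> i < n \<Longrightarrow> \<chi> i (g i) = q"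
    and padj: "\<And>i. 1 < i \<Longrightarrow> i < n \<Longrightarrow> \<chi> i (g (i-1)) * \<chi> (i-1) (g i) = inverse q"
    and pfar: "\<And>i j. 1 \<le> i \<Longrightarrow> i + 1 < j \<Longrightarrow> j \<le> n \<Longrightarrow> \<chi> i (g j) * \<chi> j (g i) = 1"
begin

abbreviation rels :: "('g,'k) galg set" where
  "rels \<equiv> sp_rels n g \<chi>"

abbreviation letter :: "nat \<Rightarrow> ('g,'k) galg" where
  "letter i \<equiv> Poly_Mapping.single (0, [i]) 1"

lemma fst_xg: "fst (xg i) = letter i"
  by (simp add: xg_def)

lemma snd_xg: "snd (xg i) = [i]"
  by (simp add: xg_def)

lemma untwisted_letter: "1 \<le> i \<Longrightarrow> i \<le> n \<Longrightarrow> untwisted \<chi> (letter i)"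
  using chi_hom[of i 0 0] chi_nz[of i 0] by (simp add: untwisted_single chiw_def)

lemma untwisted_pair_xg: "1 \<le> i \<Longrightarrow> i \<le> n \<Longrightarrow> untwisted_pair \<chi> (xg i)"
  by (simp add: untwisted_pair_def fst_xg untwisted_letter)

lemma vanishes_sbr_rel:
  assumes "fst (sbr g \<chi> u v) \<in> rels" "untwisted_pair \<chi> u" "untwisted_pair \<chi> v"
  shows "vanishes \<chi> rels (fst (sbr g \<chi> u v))"
  using assms untwisted_pair_sbr by (metis untwisted_pair_def vanishes_gen)

lemma skew_commute_far:
  "1 \<le> i \<Longrightarrow> i + 1 < j \<Longrightarrow> j \<le> n \<Longrightarrow> skew_commute g \<chi> rels (xg i) (xg j)"
  unfolding skew_commute_def
  by (rule vanishes_sbr_rel) (auto simp: sp_rels_def intro!: untwisted_pair_xg)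

lemma skew_commute_far_rev:
  assumes "1 \<le> j" "j + 1 < i" "i \<le> n"
  shows "skew_commute g \<chi> rels (xg i) (xg j)"
proof (rule skew_commute_swap)
  show "untwisted_pair \<chi> (xg j)" "untwisted_pair \<chi> (xg i)"
    using assms by (auto intro: untwisted_pair_xg)
  show "pdeg g \<chi> (snd (xg i)) (snd (xg j)) * pdeg g \<chi> (snd (xg j)) (snd (xg i)) = 1"
    using pfar[of j i] assms by (simp add: snd_xg pdeg_def mult.commute)
  show "skew_commute g \<chi> rels (xg j) (xg i)"
    using skew_commute_far assms by simp
qed

lemma vanishes_far:
  "1 \<le> i \<Longrightarrow> i + 1 < j \<Longrightarrow> j \<le> n \<Longrightarrow> vanishes \<chi> rels (skew (letter i) (letter j) (\<chi> i (g j)))"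
  using skew_commute_far[of i j] untwisted_pair_xg[of i] untwisted_pair_xg[of j]
  by (simp add: skew_commute_def fst_sbr fst_xg snd_xg pdeg_def)

lemma vanishes_serre_left:
  assumes "1 \<le> i" "i + 2 \<le> n"
  shows "vanishes \<chi> rels
    (skew (letter i) (skew (letter i) (letter (i+1)) (\<chi> i (g (i+1)))) (q * \<chi> i (g (i+1))))"
proof -
  have "vanishes \<chi> rels (fst (sbr g \<chi> (xg i) (sbr g \<chi> (xg i) (xg (i+1)))))"
    using assms by (intro vanishes_sbr_rel) (auto simp: sp_rels_def intro!: untwisted_pair_xg untwisted_pair_sbr)
  then show ?thesis
    using assms pii[of i] untwisted_pair_xg[of i] untwisted_pair_xg[of "i+1"]
    by (simp add: fst_sbr snd_sbr untwisted_pair_sbr fst_xg snd_xg pdeg_def)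
qed

lemma vanishes_serre_right:
  assumes "1 \<le> i" "i + 2 \<le> n"
  shows "vanishes \<chi> rels
    (skew (skew (letter i) (letter (i+1)) (\<chi> i (g (i+1)))) (letter (i+1)) (\<chi> i (g (i+1)) * q))"
proof -
  have "vanishes \<chi> rels (fst (sbr g \<chi> (sbr g \<chi> (xg i) (xg (i+1))) (xg (i+1))))"
    using assms by (intro vanishes_sbr_rel) (auto simp: sp_rels_def intro!: untwisted_pair_xg untwisted_pair_sbr)
  then show ?thesis
    using assms pii[of "i+1"] untwisted_pair_xg[of i] untwisted_pair_xg[of "i+1"]
    by (simp add: fst_sbr snd_sbr untwisted_pair_sbr fst_xg snd_xg pdeg_def)
qed

lemma vanishes_serre_triple:
  assumes i: "2 \<le> i" "i + 2 \<le> n"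
  shows "vanishes \<chi> rels (fst (foldr (sbr g \<chi>) [xg i, xg (i+1), xg i] (xg (i-1))))"
proof -
  define r1 where "r1 = \<chi> (i-1) (g i)"
  define r2 where "r2 = \<chi> i (g (i+1))"
  define r3 where "r3 = \<chi> (i-1) (g (i+1))"
  have nz: "r1 \<noteq> 0" "r2 \<noteq> 0" "r3 \<noteq> 0"
    unfolding r1_def r2_def r3_def using i chi_nz by auto
  have pba: "\<chi> i (g (i-1)) = inverse q * inverse r1"
    using padj[of i] i nz q_nz unfolding r1_def by (simp add: field_simps)
  have pdb: "\<chi> (i+1) (g i) = inverse q * inverse r2"
    using padj[of "i+1"] i nz q_nz unfolding r2_def by (simp add: field_simps)
  have pda: "\<chi> (i+1) (g (i-1)) = inverse r3"
    using pfar[of "i-1" "i+1"] i nz unfolding r3_def by (simp add: field_simps)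
  have "fst (foldr (sbr g \<chi>) [xg i, xg (i+1), xg i] (xg (i-1)))
      = skew (letter i) (skew (letter (i+1)) (skew (letter i) (letter (i-1)) (\<chi> i (g (i-1))))
          (\<chi> (i+1) (g i) * \<chi> (i+1) (g (i-1)))) (\<chi> i (g (i+1)) * (\<chi> i (g i) * \<chi> i (g (i-1))))"
    using i untwisted_pair_xg[of "i-1"] untwisted_pair_xg[of i] untwisted_pair_xg[of "i+1"]
    by (simp add: fst_sbr snd_sbr untwisted_pair_sbr fst_xg snd_xg pdeg_def)
  also have "\<dots> = skew (letter i) (skew (letter (i+1)) (skew (letter i) (letter (i-1))
      (inverse q * inverse r1)) (inverse q * inverse r2 * inverse r3)) (r2 * q * (inverse q * inverse r1))"
    using pii[of i] i by (simp only: pba pdb pda r2_def[symmetric] mult.assoc)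
  finally have lhs: "fst (foldr (sbr g \<chi>) [xg i, xg (i+1), xg i] (xg (i-1))) = \<dots>" .
  have t: "inverse (q + 1) * (q + 1) = 1"
    using q_neq_minus_one by (metis add_eq_0_iff eq_neg_iff_add_eq_0 left_inverse)
  have dist: "i - 1 \<noteq> i" "i \<noteq> i + 1" "i - 1 \<noteq> i + 1"
    using i by auto
  have unt: "untwisted \<chi> (letter (i-1))" "untwisted \<chi> (letter i)" "untwisted \<chi> (letter (i+1))"
    "untwisted \<chi> (letter i * letter i)"
    using i by (simp_all add: untwisted_letter untwisted_mult)
  have serre_left: "vanishes \<chi> rels (skew (letter i) (skew (letter i) (letter (i+1)) r2) (q * r2))"
    using vanishes_serre_left[of i] i unfolding r2_def by simp
  have serre_right: "vanishes \<chi> rels (skew (skew (letter (i-1)) (letter i) r1) (letter i) (r1 * q))"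
    using vanishes_serre_right[of "i-1"] i unfolding r1_def by simp
  have far: "vanishes \<chi> rels (skew (letter (i-1)) (letter (i+1)) r3)"
    using vanishes_far[of "i-1" "i+1"] i unfolding r3_def by simp
  show ?thesis
    unfolding lhs skew_nested_triple_identity[OF dist q_nz nz t refl refl refl]
    using vanishes_mult_right[OF serre_left unt(1)] vanishes_mult_left[OF serre_left unt(1)]
      vanishes_mult_right[OF serre_right unt(3)] vanishes_mult_left[OF serre_right unt(3)]
      vanishes_mult_right[OF far unt(4)] vanishes_mult_left[OF vanishes_mult_right[OF far unt(2)] unt(2)]
      vanishes_mult_left[OF vanishes_mult_left[OF far unt(2)] unt(2)]
    by (intro vanishes_add vanishes_scale)
qed

lemma vanishes_serre_pair:
  assumes "3 \<le> n"
  shows "vanishes \<chi> rels (fst (foldr (sbr g \<chi>) [xg (n-1), xg (n-1)] (xg (n-2))))"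
proof -
  define r where "r = \<chi> (n-2) (g (n-1))"
  have nz: "r \<noteq> 0"
    unfolding r_def using assms chi_nz by auto
  have pba: "\<chi> (n-1) (g (n-2)) = inverse q * inverse r"
    using padj[of "n-1"] assms nz q_nz unfolding r_def by (simp add: field_simps numeral_eq_Suc)
  have "fst (foldr (sbr g \<chi>) [xg (n-1), xg (n-1)] (xg (n-2)))
      = skew (letter (n-1)) (skew (letter (n-1)) (letter (n-2)) (\<chi> (n-1) (g (n-2))))
          (\<chi> (n-1) (g (n-1)) * \<chi> (n-1) (g (n-2)))"
    using assms untwisted_pair_xg[of "n-2"] untwisted_pair_xg[of "n-1"]
    by (simp add: fst_sbr snd_sbr untwisted_pair_sbr fst_xg snd_xg pdeg_def)
  also have "\<dots> = skew (letter (n-1)) (skew (letter (n-1)) (letter (n-2)) (inverse q * inverse r))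
      (q * (inverse q * inverse r))"
    using pii[of "n-1"] assms by (simp only: pba)
  also have "\<dots> = scale (inverse q * inverse r * inverse r)
      (skew (skew (letter (n-2)) (letter (n-1)) r) (letter (n-1)) (r * q))"
    using q_nz nz by (rule skew_nested_pair_identity)
  finally have lhs: "fst (foldr (sbr g \<chi>) [xg (n-1), xg (n-1)] (xg (n-2))) = \<dots>" .
  have "n - 2 + 1 = n - 1"
    using assms by simp
  then have "vanishes \<chi> rels (skew (skew (letter (n-2)) (letter (n-1)) r) (letter (n-1)) (r * q))"
    using vanishes_serre_right[of "n-2"] assms unfolding r_def by simp
  then show ?thesis
    unfolding lhs by (rule vanishes_scale)
qed

lemma skew_commute_xg_descending:
  assumes s: "1 \<le> s" "s < i" and i: "i < n"
  shows "skew_commute g \<chi> rels (xg i) (rnest g \<chi> (map xg (rev [s..<n])))"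
proof (cases "i + 2 \<le> n")
  case True
  let ?far = "map xg (rev [i+2..<n])" and ?rest = "map xg (rev [s..<i-1])"
  let ?z = "rnest g \<chi> (xg (i-1) # ?rest)"
  have "[s..<n] = [s..<i-1] @ [i-1..<n]"
    using s i by (intro upt_append_split) auto
  moreover have "[i-1..<n] = [i-1, i, i+1] @ [i+2..<n]"
    using s True by (simp add: upt_conv_Cons)
  ultimately have split: "map xg (rev [s..<n]) = (?far @ [xg (i+1), xg i]) @ xg (i-1) # ?rest"
    by simp
  have y: "rnest g \<chi> (map xg (rev [s..<n])) = foldr (sbr g \<chi>) ?far (sbr g \<chi> (xg (i+1)) (sbr g \<chi> (xg i) ?z))"
    unfolding split rnest_append_Cons by simp
  have unt: "\<forall>z\<in>set ([xg i, xg (i+1), xg i] @ xg (i-1) # ?rest). untwisted_pair \<chi> z"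
    "\<forall>z\<in>set ?far. untwisted_pair \<chi> z"
    using s True by (auto intro!: untwisted_pair_xg)
  have "vanishes \<chi> rels (fst (foldr (sbr g \<chi>) [xg i, xg (i+1), xg i] ?z))"
    using unt(1) s True
    by (intro vanishes_foldr_rnest vanishes_serre_triple) (auto intro!: skew_commute_far_rev)
  then have "skew_commute g \<chi> rels (xg i) (sbr g \<chi> (xg (i+1)) (sbr g \<chi> (xg i) ?z))"
    by (simp add: skew_commute_def)
  then show ?thesis
    unfolding y using unt s True
    by (intro skew_commute_foldr untwisted_pair_sbr untwisted_pair_rnest)
      (auto intro!: skew_commute_far)
next
  case False
  then have top: "i = n - 1" "3 \<le> n" using s i by auto
  let ?rest = "map xg (rev [s..<n-2])"
  have "[s..<n] = [s..<n-2] @ [n-2..<n]"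
    using s top by (intro upt_append_split) auto
  moreover have "[n-2..<n] = [n-2, n-1]"
    using top by (simp add: upt_conv_Cons numeral_eq_Suc)
  ultimately have y: "rnest g \<chi> (map xg (rev [s..<n])) = sbr g \<chi> (xg (n-1)) (rnest g \<chi> (xg (n-2) # ?rest))"
    by (simp add: rnest_Cons)
  have "vanishes \<chi> rels (fst (foldr (sbr g \<chi>) [xg (n-1), xg (n-1)] (rnest g \<chi> (xg (n-2) # ?rest))))"
    using s top
    by (intro vanishes_foldr_rnest vanishes_serre_pair) (auto intro!: untwisted_pair_xg skew_commute_far_rev)
  then show ?thesis
    unfolding y top(1) by (simp add: skew_commute_def)
qed

lemma far_commuting_generators_descending:
  assumes "1 \<le> s" "s < k" "k \<le> n"
  shows "far_commuting g \<chi> rels (map xg [k..<n+1] @ [rnest g \<chi> (map xg (rev [s..<n]))])"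
    (is "far_commuting g \<chi> rels ?L")
  unfolding far_commuting_def
proof (intro allI impI)
  fix i j assume ij: "i + 1 < j" "j < length ?L"
  have len: "length ?L = n + 2 - k" using assms by simp
  have Lx: "?L ! l = xg (k + l)" if "l < n + 1 - k" for l
    using that by (simp add: nth_append del: upt_Suc)
  show "skew_commute g \<chi> rels (?L ! i) (?L ! j)"
  proof (cases "j < n + 1 - k")
    case True
    then show ?thesis using Lx[of i] Lx[of j] ij assms by (auto intro!: skew_commute_far)
  next
    case False
    then have "j = n + 1 - k" using ij len by auto
    then show ?thesis
      using Lx[of i] ij assms by (auto simp: nth_append intro!: skew_commute_xg_descending)
  qed
qed

end

lemma map_xe_eq_map_xg: "\<forall>j\<in>set js. j \<le> n \<Longrightarrow> map (xe n) js = map xg js"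
  by (auto simp: xe_def)

lemma vw_eq_rnest_descending:
  assumes "n < m" "m < 2 * n"
  shows "vw n g \<chi> (n+1) m = rnest g \<chi> (map xg (rev [2*n-m..<n]))"
proof -
  have "map (\<lambda>j. 2 * n - j) [n+1..<m+1] = rev [2*n-m..<n]"
  proof (rule nth_equalityI)
    fix j assume "j < length (map (\<lambda>j. 2 * n - j) [n+1..<m+1])"
    then show "map (\<lambda>j. 2 * n - j) [n+1..<m+1] ! j = rev [2*n-m..<n] ! j"
      using assms by (simp add: rev_nth nth_upt del: upt_Suc)
  qed (use assms in simp)
  moreover have "map (xe n) [n+1..<m+1] = map xg (map (\<lambda>j. 2 * n - j) [n+1..<m+1])"
    by (auto simp: xe_def)
  ultimately have "map (xe n) [n+1..<m+1] = map xg (rev [2*n-m..<n])"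
    by (simp del: upt_Suc)
  then show ?thesis
    unfolding vw_def by (rule arg_cong)
qed

theorem lemma3p5:
  fixes n k m :: nat and q :: "'k::field"
    and g :: "nat \<Rightarrow> 'g::ab_group_add" and \<chi> :: "nat \<Rightarrow> 'g \<Rightarrow> 'k"
    and t1 t2 :: "(('g,'k) galg \<times> nat list) btree"
  assumes n2: "n \<ge> 2"
    and chi_hom: "\<And>i a b. 1 \<le> i \<Longrightarrow> i \<le> n \<Longrightarrow> \<chi> i (a + b) = \<chi> i a * \<chi> i b"
    and chi_nz: "\<And>i a. 1 \<le> i \<Longrightarrow> i \<le> n \<Longrightarrow> \<chi> i a \<noteq> 0"
    and q_nz: "q \<noteq> 0" and q3: "q ^ 3 \<noteq> 1" and qm1: "q \<noteq> -1"
    and pii: "\<And>i. 1 \<le> i \<Longrightarrow> i < n \<Longrightarrow> \<chi> i (g i) = q"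
    and pnn: "\<chi> n (g n) = q ^ 2"
    and padj: "\<And>i. 1 < i \<Longrightarrow> i < n \<Longrightarrow> \<chi> i (g (i-1)) * \<chi> (i-1) (g i) = inverse q"
    and plast: "\<chi> (n-1) (g n) * \<chi> n (g (n-1)) = inverse (q ^ 2)"
    and pfar: "\<And>i j. 1 \<le> i \<Longrightarrow> i + 1 < j \<Longrightarrow> j \<le> n \<Longrightarrow> \<chi> i (g j) * \<chi> j (g i) = 1"
    and k: "1 \<le> k" "k \<le> n"
    and m: "2*n - k < m" "m < 2*n"
    and t1: "leaves t1 = map (xe n) [k..<n+1] @ [vw n g \<chi> (n+1) m]"
    and t2: "leaves t2 = map (xe n) [k..<n+1] @ [vw n g \<chi> (n+1) m]"
  shows "Ueq n g \<chi> (fst (bval (sbr g \<chi>) t1)) (fst (bval (sbr g \<chi>) t2))"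
proof -
  txt \<open>x_n only ever meets y_m as a neighbour, and y_m involves only x_s, ..., x_(n-1).\<close>
  interpret sp_setting n q g \<chi>
    by unfold_locales (use chi_hom chi_nz q_nz qm1 pii padj pfar in auto)
  define s where "s = 2*n - m"
  have s: "1 \<le> s" "s < k" and "n < m"
    using m k unfolding s_def by auto
  define L where "L = map xg [k..<n+1] @ [rnest g \<chi> (map xg (rev [s..<n]))]"
  have leaves: "leaves t1 = L" "leaves t2 = L"
    unfolding t1 t2 L_def s_def vw_eq_rnest_descending[OF \<open>n < m\<close> m(2)]
    by (simp_all del: upt_Suc add: map_xe_eq_map_xg)
  have far: "far_commuting g \<chi> rels L"
    unfolding L_def using s k(2) by (rule far_commuting_generators_descending)
  have unt: "\<forall>z\<in>set L. untwisted_pair \<chi> z"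
    unfolding L_def using s k by (auto intro!: untwisted_pair_xg untwisted_pair_rnest)
  have "cong_mod \<chi> rels (bval (sbr g \<chi>) t1) (bval (sbr g \<chi>) t2)"
    using bval_sbr_cong_rnest[of g \<chi> rels t1] bval_sbr_cong_rnest[of g \<chi> rels t2] leaves far unt
    by (metis cong_mod_sym cong_mod_trans)
  then show ?thesis
    by (simp add: Ueq_def cong_mod_def vanishes_def)
qed

end
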